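(* Let $R:\mathbb{T}^2\to\mathbb{T}^2$ be a linear involution of the torus $\mathbb{T}^2=\mathbb{R}^2/\mathbb{Z}^2$, i.e. $R$ is induced by an integer matrix $A$ with $\det A=\pm1$ and $R\circ R=\mathrm{Id}$, and assume $R\neq \pm\,\mathrm{Id}$. Then there exists a linear Anosov diffeomorphism $f$ of $\mathbb{T}^2$ which is $R$-reversible, i.e. $R\circ f=f^{-1}\circ R$.
   Context: A linear diffeomorphism of $\mathbb{T}^2$ is one induced (via the projection $\mathbb{R}^2\to\mathbb{R}^2/\mathbb{Z}^2$) by a $2\times 2$ matrix with integer entries and determinant $\pm1$; such maps preserve the normalized area. A linear Anosov diffeomorphism is one induced by such a matrix $L$ having no eigenvalue on the unit circle. A diffeomorphism $R$ is an involution if $R\circ R=\mathrm{Id}$, and $f$ is $R$-reversible if $R\circ f=f^{-1}\circ R$. *)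

theory Defs
  imports "HOL-Analysis.Analysis"
begin

text \<open>Points of the torus R^2/Z^2 are represented by points of R^2; two points
  represent the same torus point iff their difference lies in Z^2.\<close>
definition torus_eq :: "real^2 \<Rightarrow> real^2 \<Rightarrow> bool" where
  "torus_eq x y \<longleftrightarrow> (\<forall>i. x$i - y$i \<in> \<int>)"

definition lin_lift :: "int^2^2 \<Rightarrow> real^2 \<Rightarrow> real^2" where
  "lin_lift M x = (\<chi> i j. (of_int (M$i$j) :: real)) *v x"

definition int_mat_eigenvalue :: "int^2^2 \<Rightarrow> complex \<Rightarrow> bool" where
  "int_mat_eigenvalue M \<mu> \<longleftrightarrow>
     (\<exists>v::complex^2. v \<noteq> 0 \<and> (\<chi> i j. (of_int (M$i$j) :: complex)) *v v = \<mu> *s v)"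

definition linear_anosov :: "int^2^2 \<Rightarrow> bool" where
  "linear_anosov L \<longleftrightarrow> (det L = 1 \<or> det L = -1) \<and>
     (\<forall>\<mu>. cmod \<mu> = 1 \<longrightarrow> \<not> int_mat_eigenvalue L \<mu>)"

end

theory Submission
  imports Defs
begin

text \<open>An integer matrix \<open>A\<close> inducing an involution of the torus is itself an involution, and
  if \<open>A \<noteq> \<plusminus>1\<close> then by Cayley--Hamilton it has trace \<open>0\<close> and determinant \<open>-1\<close>, i.e. it
  is a reflection. For any other integer reflection \<open>S\<close>, the product \<open>L = A S\<close> has
  determinant \<open>1\<close> and inverse \<open>S A\<close>, and \<open>A L = S = L\<^sup>-\<^sup>1 A\<close>, so \<open>L\<close> is reversible
  under \<open>A\<close>. Choosing \<open>S\<close> with \<open>\<bar>trace (A S)\<bar> > 2\<close>, the characteristic polynomial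
  \<open>\<mu>\<^sup>2 - trace L \<mu> + 1\<close> has no root on the unit circle, so \<open>L\<close> is Anosov.\<close>

definition of_int_mat :: "int^'n^'m \<Rightarrow> 'a::ring_1^'n^'m" where
  "of_int_mat M = (\<chi> i j. of_int (M$i$j))"

lemma of_int_mat_mult:
  "(of_int_mat (M ** N) :: 'a::comm_ring_1^_^_) = of_int_mat M ** of_int_mat N"
  by (simp add: vec_eq_iff of_int_mat_def matrix_matrix_mult_def)

lemma of_int_mat_mat [simp]: "of_int_mat (mat k) = mat (of_int k)"
  by (simp add: vec_eq_iff of_int_mat_def mat_def)

lemma trace_of_int_mat_2: "trace (of_int_mat M :: 'a::comm_ring_1^2^2) = of_int (trace M)"
  by (simp add: trace_def sum_2 of_int_mat_def)

lemma det_of_int_mat_2: "det (of_int_mat M :: 'a::comm_ring_1^2^2) = of_int (det M)"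
  by (simp add: det_2 of_int_mat_def)

lemma lin_lift_mult: "lin_lift M (lin_lift N x) = lin_lift (M ** N) x"
  by (simp add: lin_lift_def matrix_vector_mul_assoc of_int_mat_mult flip: of_int_mat_def)

lemma int_eq_0_if_multiples_Ints:
  fixes d :: int
  assumes "\<forall>t::real. of_int d * t \<in> \<int>"
  shows "d = 0"
proof (rule ccontr)
  assume "d \<noteq> 0"
  define t where "t = 1 / (2 * real_of_int \<bar>d\<bar>)"
  obtain k where k: "of_int d * t = of_int k"
    using assms by (auto elim: Ints_cases)
  have "\<bar>of_int d * t\<bar> = 1 / 2"
    using \<open>d \<noteq> 0\<close> by (simp add: t_def abs_mult)
  then have "\<bar>k\<bar> * 2 = 1"
    unfolding k by linarith
  then show False
    by presburger
qed

lemma lin_lift_eq_if_torus_eq: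
  assumes "\<forall>x. torus_eq (lin_lift M x) (lin_lift N x)"
  shows "M = N"
proof -
  have "M$i$j - N$i$j = 0" for i j
  proof (rule int_eq_0_if_multiples_Ints, rule allI)
    fix t :: real
    define x :: "real^2" where "x = (\<chi> k. if k = j then t else 0)"
    have "lin_lift M x $ i - lin_lift N x $ i = of_int (M$i$j - N$i$j) * t"
      by (simp add: lin_lift_def matrix_vector_mult_def x_def if_distrib algebra_simps
          cong: if_cong)
    then show "of_int (M$i$j - N$i$j) * t \<in> \<int>"
      using assms by (metis torus_eq_def)
  qed
  then show ?thesis
    by (simp add: vec_eq_iff)
qed

lemma mat_mult_vector: "mat c *v v = c *s (v::'a::comm_semiring_1^'n)"
  by (simp add: vec_eq_iff matrix_vector_mult_def mat_def if_distrib [of "\<lambda>x. x * _"]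
      cong: if_cong)

lemma lin_lift_mat: "lin_lift (mat k) x = of_int k *s x"
  by (simp flip: of_int_mat_def add: lin_lift_def mat_mult_vector)

lemma det_eq_0_if_eigenvector:
  fixes M :: "'a::field^'n^'n"
  assumes "v \<noteq> 0" and "M *v v = \<mu> *s v"
  shows "det (M - mat \<mu>) = 0"
proof (rule ccontr)
  assume "det (M - mat \<mu>) \<noteq> 0"
  then obtain B where B: "B ** (M - mat \<mu>) = mat 1"
    using invertible_det_nz invertible_left_inverse by blast
  have "(M - mat \<mu>) *v v = 0"
    using assms(2) by (simp add: matrix_vector_mult_diff_rdistrib mat_mult_vector)
  then have "v = 0"
    by (metis B matrix_vector_mul_assoc matrix_vector_mul_lid matrix_vector_mult_0_right)
  with assms(1) show False by simp
qed

lemma det_minus_mat_2: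
  fixes M :: "'a::comm_ring_1^2^2"
  shows "det (M - mat \<mu>) = \<mu>\<^sup>2 - trace M * \<mu> + det M"
  by (simp add: det_2 trace_def sum_2 mat_def power2_eq_square algebra_simps)

lemma cayley_hamilton_2:
  fixes M :: "'a::comm_ring_1^2^2"
  shows "(M ** M) $ i $ j = trace M * M $ i $ j - (if i = j then det M else 0)"
  using exhaust_2[of i] exhaust_2[of j]
  by (auto simp: matrix_matrix_mult_def sum_2 det_2 trace_def algebra_simps)

lemma det_eq_neg_1_if_involution_trace_0:
  fixes M :: "'a::comm_ring_1^2^2"
  assumes "M ** M = mat 1" and "trace M = 0"
  shows "det M = -1"
  using cayley_hamilton_2[of M 1 1] assms by (simp add: mat_def minus_equation_iff)

lemma involution_if_trace_0_det_neg_1: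
  fixes M :: "'a::comm_ring_1^2^2"
  assumes "trace M = 0" and "det M = -1"
  shows "M ** M = mat 1"
  using cayley_hamilton_2[of M] assms by (simp add: vec_eq_iff mat_def)

lemma trace_eq_0_if_involution:
  fixes M :: "'a::idom^2^2"
  assumes "M ** M = mat 1" and "M \<noteq> mat 1" and "M \<noteq> mat (-1)"
  shows "trace M = 0"
proof (rule ccontr)
  assume t: "trace M \<noteq> 0"
  have "trace M * M$1$2 = 0" "trace M * M$2$1 = 0" "trace M * (M$1$1 - M$2$2) = 0"
    using cayley_hamilton_2[of M 1 2] cayley_hamilton_2[of M 2 1]
      cayley_hamilton_2[of M 1 1] cayley_hamilton_2[of M 2 2] assms(1)
    by (simp_all add: mat_def algebra_simps)
  with t have diag: "M$1$2 = 0" "M$2$1 = 0" "M$2$2 = M$1$1"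
    by simp_all
  have "M$1$1 * M$1$1 = 1"
    using arg_cong[OF assms(1), of "\<lambda>X. X$1$1"] diag
    by (simp add: matrix_matrix_mult_def sum_2 mat_def)
  then have "M$1$1 = 1 \<or> M$1$1 = -1"
    by (simp add: square_eq_1_iff)
  then have "M = mat 1 \<or> M = mat (-1)"
    using diag by (auto simp: vec_eq_iff forall_2 mat_def)
  with assms show False
    by blast
qed

lemma char_poly_eq_0_if_int_mat_eigenvalue:
  assumes "int_mat_eigenvalue M \<mu>"
  shows "\<mu>\<^sup>2 - of_int (trace M) * \<mu> + of_int (det M) = 0"
proof -
  obtain v where "v \<noteq> 0" and "of_int_mat M *v v = \<mu> *s v"
    using assms unfolding int_mat_eigenvalue_def of_int_mat_def by blast
  then have "det (of_int_mat M - mat \<mu>) = 0"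
    by (rule det_eq_0_if_eigenvector)
  then show ?thesis
    by (simp add: det_minus_mat_2 trace_of_int_mat_2 det_of_int_mat_2)
qed

lemma abs_le_2_if_unimodular_root:
  fixes \<mu> :: complex and t :: real
  assumes "cmod \<mu> = 1" and "\<mu>\<^sup>2 - of_real t * \<mu> + 1 = 0"
  shows "\<bar>t\<bar> \<le> 2"
proof -
  have "cnj \<mu> * \<mu> = 1"
    using assms(1) by (metis complex_norm_square mult.commute of_real_1 power_one)
  then have "cnj \<mu> * (\<mu>\<^sup>2 - of_real t * \<mu> + 1) = \<mu> - of_real t + cnj \<mu>"
    by (simp add: power2_eq_square algebra_simps)
  with assms(2) have "of_real t = \<mu> + cnj \<mu>"
    by (simp add: algebra_simps)
  then have "t = 2 * Re \<mu>"
    by (metis complex_add_cnj of_real_eq_iff)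
  moreover have "\<bar>Re \<mu>\<bar> \<le> 1"
    using abs_Re_le_cmod[of \<mu>] assms(1) by simp
  ultimately show ?thesis
    by simp
qed

lemma linear_anosov_if_hyperbolic:
  assumes "det M = 1" and "2 < \<bar>trace M\<bar>"
  shows "linear_anosov M"
proof -
  have "\<not> int_mat_eigenvalue M \<mu>" if "cmod \<mu> = 1" for \<mu>
  proof
    assume "int_mat_eigenvalue M \<mu>"
    then have "\<mu>\<^sup>2 - of_real (of_int (trace M)) * \<mu> + 1 = 0"
      using char_poly_eq_0_if_int_mat_eigenvalue[of M \<mu>] assms(1) by simp
    then have "\<bar>of_int (trace M) :: real\<bar> \<le> 2"
      by (rule abs_le_2_if_unimodular_root[OF that])
    with assms(2) show False
      by linarith
  qed
  with assms(1) show ?thesis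
    by (simp add: linear_anosov_def)
qed

lemma abs_gt_2_add_signed_square:
  fixes a x :: int
  assumes "x \<noteq> 0"
  shows "2 < \<bar>2 * a + x * (3 * x * (if 0 \<le> a then 1 else -1))\<bar>"
proof -
  have "1 \<le> x * x"
    using assms by (auto simp: int_one_le_iff_zero_less zero_less_mult_iff linorder_neq_iff)
  then show ?thesis
    by (cases "0 \<le> a") (simp_all add: abs_if algebra_simps)
qed

lemma exists_reflection_with_hyperbolic_product:
  fixes A :: "int^2^2"
  assumes "trace A = 0" and "det A = -1"
  shows "\<exists>S. trace S = 0 \<and> det S = -1 \<and> 2 < \<bar>trace (A ** S)\<bar>"
proof -
  define a b c where "a = A$1$1" and "b = A$1$2" and "c = A$2$1"
  have A22: "A$2$2 = -a"
    using assms(1) by (simp add: trace_def sum_2 a_def)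
  with assms(2) have abc: "a * a + b * c = 1"
    by (simp add: det_2 a_def b_def c_def)
  define reflection :: "int \<Rightarrow> int \<Rightarrow> int \<Rightarrow> int^2^2"
    where "reflection p q r = vector [vector [p, q], vector [r, -p]]" for p q r
  have reflection: "trace (reflection p q r) = 0" "det (reflection p q r) = - (p * p + q * r)"
    "trace (A ** reflection p q r) = 2 * a * p + b * r + c * q" for p q r
    by (simp_all add: reflection_def trace_def sum_2 det_2 matrix_matrix_mult_def
        A22 a_def b_def c_def)
  txt \<open>Use a nonzero off-diagonal entry of \<open>A\<close>, with the sign of \<open>a\<close>; if there is none,
    then \<open>A = \<plusminus>diag(1, -1)\<close> and \<open>p = 2\<close> does it.\<close>
  have "\<exists>p q r. p * p + q * r = 1 \<and> 2 < \<bar>2 * a * p + b * r + c * q\<bar>"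
  proof -
    define s :: int where "s = (if 0 \<le> a then 1 else -1)"
    consider "b \<noteq> 0" | "c \<noteq> 0" | "b = 0" "c = 0"
      by blast
    then show ?thesis
    proof cases
      case 1
      then have "2 < \<bar>2 * a * 1 + b * (3 * b * s) + c * 0\<bar>"
        using abs_gt_2_add_signed_square[of b a] by (simp add: s_def)
      moreover have "1 * 1 + 0 * (3 * b * s) = (1::int)"
        by simp
      ultimately show ?thesis
        by blast
    next
      case 2
      then have "2 < \<bar>2 * a * 1 + b * 0 + c * (3 * c * s)\<bar>"
        using abs_gt_2_add_signed_square[of c a] by (simp add: s_def)
      moreover have "1 * 1 + (3 * c * s) * 0 = (1::int)"
        by simp
      ultimately show ?thesis
        by blast
    next
      case 3
      then have "a = 1 \<or> a = -1"
        using abc by (simp add: square_eq_1_iff)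
      then have "2 < \<bar>2 * a * 2 + b * (-3) + c * 1\<bar>"
        using 3 by auto
      moreover have "2 * 2 + 1 * (-3) = (1::int)"
        by simp
      ultimately show ?thesis
        by blast
    qed
  qed
  with reflection show ?thesis
    by metis
qed

theorem proposition1:
  fixes A :: "int^2^2"
  assumes "det A = 1 \<or> det A = -1"
    and "\<forall>x. torus_eq (lin_lift A (lin_lift A x)) x"
    and "\<not> (\<forall>x. torus_eq (lin_lift A x) x)"
    and "\<not> (\<forall>x. torus_eq (lin_lift A x) (- x))"
  shows "\<exists>L Linv :: int^2^2. linear_anosov L \<and> L ** Linv = mat 1 \<and> Linv ** L = mat 1 \<and>
           (\<forall>x. torus_eq (lin_lift A (lin_lift L x)) (lin_lift Linv (lin_lift A x)))"
proof -
  have AA: "A ** A = mat 1"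
    using assms(2) by (intro lin_lift_eq_if_torus_eq) (simp add: lin_lift_mult lin_lift_mat)
  have "A \<noteq> mat 1" and "A \<noteq> mat (-1)"
    using assms(3,4) by (auto simp: lin_lift_mat torus_eq_def)
  then have "trace A = 0"
    using AA trace_eq_0_if_involution by blast
  moreover have "det A = -1"
    using AA \<open>trace A = 0\<close> det_eq_neg_1_if_involution_trace_0 by blast
  ultimately obtain S where "trace S = 0" "det S = -1" and hyp: "2 < \<bar>trace (A ** S)\<bar>"
    using exists_reflection_with_hyperbolic_product by blast
  then have SS: "S ** S = mat 1"
    by (intro involution_if_trace_0_det_neg_1)
  define L Linv where "L = A ** S" and "Linv = S ** A"
  have "linear_anosov L"
    using hyp \<open>det A = -1\<close> \<open>det S = -1\<close> unfolding L_def
    by (intro linear_anosov_if_hyperbolic) (simp_all add: det_mul)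
  moreover have "L ** Linv = mat 1" and "Linv ** L = mat 1"
    using AA SS by (simp_all add: L_def Linv_def matrix_mul_assoc
        flip: matrix_mul_assoc[of A S] matrix_mul_assoc[of S A])
  moreover have "A ** L = Linv ** A"
    using AA by (simp add: L_def Linv_def matrix_mul_assoc
        flip: matrix_mul_assoc[of A A] matrix_mul_assoc[of S A A])
  ultimately show ?thesis
    by (metis lin_lift_mult torus_eq_def diff_self Ints_0)
qed

end
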